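(* Under the DS scheme described in the context, if a driver $d$ (respectively rider $r$) truthfully reports $\bar b_d$ (respectively $\bar\delta_r$) and is matched to no one, then she cannot increase her utility by falsely reporting some other value $b_d$ (respectively $\delta_r$).
   Context: One decision epoch with finite sets $\mathcal{D}$ (drivers) and $\mathcal{R}$ (riders). Rider $r$ requests a trip of shortest-route length $h_r$ with destination $t_r$; $\tau_{dr}\ge0$ is the pick-up distance from driver $d$ to rider $r$, $\tau_d^{\min}=\min_{r}\tau_{dr}$, $\tau_r^{\min}=\min_d\tau_{dr}$. Public constants $\alpha,\beta>0$; $f(t_r)$ is a given opportunity cost. Driver $d$ has a private true cost per unit extra pick-up distance $\bar b_d$ and reports a bid $b_d$; rider $r$ has a private true value $\bar\delta_r$ and reports $\delta_r$. For a potential match $(d,r)$ the valuations are $P_d(b_d)=\alpha h_r+b_d(\tau_{dr}-\tau_d^{\min})+f(t_r)$ and $P_r(\delta_r)=\beta h_r-\delta_r(\tau_{dr}-\tau_r^{\min})$, and the social welfare is $\sigma_{dr}=P_r-P_d$ (computed from reported bids). Each potential match has a sensing gain $\zeta_{dr}\ge0$ depending only on locations and the rider's origin-destination, not on bids. DS matching problem: maximize $\sum_{r,d}\zeta_{dr}x_{dr}$ subject to $\sum_r x_{dr}\le1$ $\forall d$, $\sum_d x_{dr}\le 1$ $\forall r$, $\sum_{r,d}\sigma_{dr}x_{dr}\ge0$, $x_{dr}\in\{0,1\}$; let $x^*$ be an optimal solution with value $U^*$, $\mathcal{D}^*,\mathcal{R}^*$ the matched drivers and riders, $V=\sum_{r,d}\sigma_{dr}x^*_{dr}$.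 For $d\in\mathcal{D}^*$, $\Delta U_d=U^*-U^*_{d-}$ where $U^*_{d-}$ is the optimal value with $d$ removed; analogously $\Delta U_r$. Shares $\lambda_d=\Delta U_d/(\sum_{d'\in\mathcal{D}^*}\Delta U_{d'}+\sum_{r'\in\mathcal{R}^*}\Delta U_{r'})$, $\lambda_r$ analogously; bonuses $\rho_d=V\lambda_d$, $\rho_r=V\lambda_r$; a matched driver is paid $q_d=P_d+\rho_d$ and a matched rider is charged $q_r=P_r-\rho_r$. A matched driver's utility is $q_d$ minus her valuation evaluated at her true bid, a matched rider's utility is her valuation at her true bid minus $q_r$; an unmatched participant has utility $0$.
   Formalization: The optimal solution $x^*$ is the optimum of least rank under a fixed priority that is injective on matchings, does not depend on bids, and is used for both the truthful and the misreported report. The statement above fails without it. *)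

theory Defs
  imports Complex_Main
begin

definition matchings :: "'d set \<Rightarrow> 'r set \<Rightarrow> ('d \<Rightarrow> 'r \<Rightarrow> bool) set" where
  "matchings D R = {x. \<forall>d r. x d r \<longrightarrow> d \<in> D \<and> r \<in> R}"

definition tau_dmin :: "'r set \<Rightarrow> ('d \<Rightarrow> 'r \<Rightarrow> real) \<Rightarrow> 'd \<Rightarrow> real" where
  "tau_dmin R \<tau> d = Min ((\<lambda>r. \<tau> d r) ` R)"

definition tau_rmin :: "'d set \<Rightarrow> ('d \<Rightarrow> 'r \<Rightarrow> real) \<Rightarrow> 'r \<Rightarrow> real" where
  "tau_rmin D \<tau> r = Min ((\<lambda>d. \<tau> d r) ` D)"

definition Pdrv :: "real \<Rightarrow> ('r \<Rightarrow> real) \<Rightarrow> ('r \<Rightarrow> 'l) \<Rightarrow> ('l \<Rightarrow> real)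
    \<Rightarrow> ('d \<Rightarrow> 'r \<Rightarrow> real) \<Rightarrow> 'r set \<Rightarrow> real \<Rightarrow> 'd \<Rightarrow> 'r \<Rightarrow> real" where
  "Pdrv \<alpha> h t f \<tau> R bd d r = \<alpha> * h r + bd * (\<tau> d r - tau_dmin R \<tau> d) + f (t r)"

definition Prid :: "real \<Rightarrow> ('r \<Rightarrow> real) \<Rightarrow> ('d \<Rightarrow> 'r \<Rightarrow> real) \<Rightarrow> 'd set
    \<Rightarrow> real \<Rightarrow> 'd \<Rightarrow> 'r \<Rightarrow> real" where
  "Prid \<beta> h \<tau> D dr d r = \<beta> * h r - dr * (\<tau> d r - tau_rmin D \<tau> r)"

definition sigma :: "real \<Rightarrow> real \<Rightarrow> ('r \<Rightarrow> real) \<Rightarrow> ('r \<Rightarrow> 'l) \<Rightarrow> ('l \<Rightarrow> real)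
    \<Rightarrow> ('d \<Rightarrow> 'r \<Rightarrow> real) \<Rightarrow> 'd set \<Rightarrow> 'r set \<Rightarrow> ('d \<Rightarrow> real) \<Rightarrow> ('r \<Rightarrow> real)
    \<Rightarrow> 'd \<Rightarrow> 'r \<Rightarrow> real" where
  "sigma \<alpha> \<beta> h t f \<tau> D R b \<delta> d r =
     Prid \<beta> h \<tau> D (\<delta> r) d r - Pdrv \<alpha> h t f \<tau> R (b d) d r"

definition msum :: "'d set \<Rightarrow> 'r set \<Rightarrow> ('d \<Rightarrow> 'r \<Rightarrow> real) \<Rightarrow> ('d \<Rightarrow> 'r \<Rightarrow> bool) \<Rightarrow> real" where
  "msum D R w x = (\<Sum>d\<in>D. \<Sum>r\<in>R. if x d r then w d r else 0)"

definition ds_feasible :: "'d set \<Rightarrow> 'r set \<Rightarrow> ('d \<Rightarrow> 'r \<Rightarrow> real) \<Rightarrow> ('d \<Rightarrow> 'r \<Rightarrow> bool) \<Rightarrow> bool" where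
  "ds_feasible D R s x \<longleftrightarrow> x \<in> matchings D R
     \<and> (\<forall>d\<in>D. card {r\<in>R. x d r} \<le> 1)
     \<and> (\<forall>r\<in>R. card {d\<in>D. x d r} \<le> 1)
     \<and> msum D R s x \<ge> 0"

definition ds_optimal :: "'d set \<Rightarrow> 'r set \<Rightarrow> ('d \<Rightarrow> 'r \<Rightarrow> real) \<Rightarrow> ('d \<Rightarrow> 'r \<Rightarrow> real)
    \<Rightarrow> ('d \<Rightarrow> 'r \<Rightarrow> bool) \<Rightarrow> bool" where
  "ds_optimal D R \<zeta> s x \<longleftrightarrow> ds_feasible D R s x \<and>
     (\<forall>y. ds_feasible D R s y \<longrightarrow> msum D R \<zeta> y \<le> msum D R \<zeta> x)"

definition ds_optval :: "'d set \<Rightarrow> 'r set \<Rightarrow> ('d \<Rightarrow> 'r \<Rightarrow> real) \<Rightarrow> ('d \<Rightarrow> 'r \<Rightarrow> real) \<Rightarrow> real" where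
  "ds_optval D R \<zeta> s = Max (msum D R \<zeta> ` {x. ds_feasible D R s x})"

text \<open>The solution actually returned by the scheme: an optimal solution, ties among optimal
solutions broken by a fixed, bid-independent priority rk (smallest rank wins).\<close>
definition ds_outcome :: "'d set \<Rightarrow> 'r set \<Rightarrow> ('d \<Rightarrow> 'r \<Rightarrow> real) \<Rightarrow> ('d \<Rightarrow> 'r \<Rightarrow> real)
    \<Rightarrow> (('d \<Rightarrow> 'r \<Rightarrow> bool) \<Rightarrow> nat) \<Rightarrow> ('d \<Rightarrow> 'r \<Rightarrow> bool) \<Rightarrow> bool" where
  "ds_outcome D R \<zeta> s rk x \<longleftrightarrow> ds_optimal D R \<zeta> s x \<and>
     (\<forall>y. ds_optimal D R \<zeta> s y \<longrightarrow> rk x \<le> rk y)"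

definition dU_drv :: "'d set \<Rightarrow> 'r set \<Rightarrow> ('d \<Rightarrow> 'r \<Rightarrow> real) \<Rightarrow> ('d \<Rightarrow> 'r \<Rightarrow> real) \<Rightarrow> 'd \<Rightarrow> real" where
  "dU_drv D R \<zeta> s d = ds_optval D R \<zeta> s - ds_optval (D - {d}) R \<zeta> s"

definition dU_rid :: "'d set \<Rightarrow> 'r set \<Rightarrow> ('d \<Rightarrow> 'r \<Rightarrow> real) \<Rightarrow> ('d \<Rightarrow> 'r \<Rightarrow> real) \<Rightarrow> 'r \<Rightarrow> real" where
  "dU_rid D R \<zeta> s r = ds_optval D R \<zeta> s - ds_optval D (R - {r}) \<zeta> s"

definition dU_total :: "'d set \<Rightarrow> 'r set \<Rightarrow> ('d \<Rightarrow> 'r \<Rightarrow> real) \<Rightarrow> ('d \<Rightarrow> 'r \<Rightarrow> real)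
    \<Rightarrow> ('d \<Rightarrow> 'r \<Rightarrow> bool) \<Rightarrow> real" where
  "dU_total D R \<zeta> s x =
     (\<Sum>d'\<in>{d'\<in>D. \<exists>r\<in>R. x d' r}. dU_drv D R \<zeta> s d')
   + (\<Sum>r'\<in>{r'\<in>R. \<exists>d\<in>D. x d r'}. dU_rid D R \<zeta> s r')"

definition bonus_drv where
  "bonus_drv D R \<zeta> s x d = msum D R s x * (dU_drv D R \<zeta> s d / dU_total D R \<zeta> s x)"

definition bonus_rid where
  "bonus_rid D R \<zeta> s x r = msum D R s x * (dU_rid D R \<zeta> s r / dU_total D R \<zeta> s x)"

definition partner_drv :: "'r set \<Rightarrow> ('d \<Rightarrow> 'r \<Rightarrow> bool) \<Rightarrow> 'd \<Rightarrow> 'r" where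
  "partner_drv R x d = (THE r. r \<in> R \<and> x d r)"

definition partner_rid :: "'d set \<Rightarrow> ('d \<Rightarrow> 'r \<Rightarrow> bool) \<Rightarrow> 'r \<Rightarrow> 'd" where
  "partner_rid D x r = (THE d. d \<in> D \<and> x d r)"

text \<open>Utility of driver d with true cost bbar, when the reported profiles are (b, delta) and
the scheme returns x: payment q_d = P_d(b_d) + rho_d minus valuation at the true bid.\<close>
definition drv_util where
  "drv_util \<alpha> \<beta> h t f \<tau> D R \<zeta> b \<delta> x d bbar =
    (if \<exists>r\<in>R. x d r then
       (let r = partner_drv R x d; s = sigma \<alpha> \<beta> h t f \<tau> D R b \<delta> in
         (Pdrv \<alpha> h t f \<tau> R (b d) d r + bonus_drv D R \<zeta> s x d) - Pdrv \<alpha> h t f \<tau> R bbar d r)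
     else 0)"

text \<open>Utility of rider r with true value dbar: valuation at the true bid minus charge
q_r = P_r(delta_r) - rho_r.\<close>
definition rid_util where
  "rid_util \<alpha> \<beta> h t f \<tau> D R \<zeta> b \<delta> x r dbar =
    (if \<exists>d\<in>D. x d r then
       (let d = partner_rid D x r; s = sigma \<alpha> \<beta> h t f \<tau> D R b \<delta> in
         Prid \<beta> h \<tau> D dbar d r - (Prid \<beta> h \<tau> D (\<delta> r) d r - bonus_rid D R \<zeta> s x r))
     else 0)"

end

theory Submission
  imports Defs
begin

text \<open>
  Let x be the outcome under truthful reports, in which participant p is unmatched, and x' the
  outcome after p misreports. If p is unmatched in x' her utility stays 0. Otherwise
  x' \<noteq> x. The misreport changes the welfare matrix only in p's row (column), so the total
  welfare of x, which does not involve p, is unchanged and x stays feasible for the misreported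
  welfare. As the tie-break rank is fixed, x' cannot also be feasible for the true welfare,
  i.e. V, the true total welfare of x', is negative. But p's utility in x' equals the change of her
  own entry of the welfare matrix plus her bonus, and the bonus is at most the reported total
  welfare V'; hence the utility is at most V' plus that change, which is V < 0.
\<close>

definition matched_pairs :: "'d set \<Rightarrow> 'r set \<Rightarrow> ('d \<Rightarrow> 'r \<Rightarrow> bool) \<Rightarrow> ('d \<times> 'r) set" where
  "matched_pairs D R x = {(d, r) \<in> D \<times> R. x d r}"

lemma finite_matched_pairs: "finite D \<Longrightarrow> finite R \<Longrightarrow> finite (matched_pairs D R x)"
  unfolding matched_pairs_def by (auto intro: finite_subset[of _ "D \<times> R"])

lemma msum_eq_sum_matched_pairs:
  assumes "finite D" "finite R"
  shows "msum D R w x = (\<Sum>(d, r)\<in>matched_pairs D R x. w d r)"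
proof -
  have "matched_pairs D R x = {p \<in> D \<times> R. x (fst p) (snd p)}"
    by (auto simp: matched_pairs_def)
  then show ?thesis
    unfolding msum_def sum.cartesian_product
    using assms by (simp add: sum.inter_filter case_prod_beta)
qed

lemma msum_cong:
  assumes "finite D" "finite R" "\<And>d r. d \<in> D \<Longrightarrow> r \<in> R \<Longrightarrow> x d r \<Longrightarrow> s d r = s' d r"
  shows "msum D R s x = msum D R s' x"
  using assms by (auto simp: msum_eq_sum_matched_pairs matched_pairs_def intro: sum.cong)

lemma msum_change_single_pair:
  assumes "finite D" "finite R" "d0 \<in> D" "r0 \<in> R" "x d0 r0"
    and "\<And>d r. d \<in> D \<Longrightarrow> r \<in> R \<Longrightarrow> x d r \<Longrightarrow> (d, r) \<noteq> (d0, r0) \<Longrightarrow> s d r = s' d r"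
  shows "msum D R s x = msum D R s' x + (s d0 r0 - s' d0 r0)"
proof -
  let ?M = "matched_pairs D R x"
  have "msum D R s x - msum D R s' x = (\<Sum>(d, r)\<in>?M. s d r - s' d r)"
    using assms(1,2) by (simp add: msum_eq_sum_matched_pairs case_prod_beta sum_subtractf)
  also have "\<dots> = s d0 r0 - s' d0 r0"
  proof -
    have "(d0, r0) \<in> ?M" using assms(3-5) by (simp add: matched_pairs_def)
    moreover have "\<forall>p \<in> ?M - {(d0, r0)}. (case p of (d, r) \<Rightarrow> s d r - s' d r) = 0"
      using assms(6) unfolding matched_pairs_def by fastforce
    ultimately show ?thesis
      using assms(1,2) by (simp add: sum.remove finite_matched_pairs sum.neutral)
  qed
  finally show ?thesis by simp
qed

lemma matched_pairs_superset:
  assumes "x \<in> matchings D' R'" "D' \<subseteq> D" "R' \<subseteq> R"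
  shows "matched_pairs D R x = matched_pairs D' R' x"
  using assms by (auto simp: matched_pairs_def matchings_def)

lemma finite_matchings:
  assumes "finite D" "finite R"
  shows "finite (matchings D R)"
proof -
  have "matchings D R \<subseteq> (\<lambda>S d r. (d, r) \<in> S) ` Pow (D \<times> R)"
  proof
    fix x assume "x \<in> matchings D R"
    then have "{(d, r). x d r} \<in> Pow (D \<times> R)" "x = (\<lambda>d r. (d, r) \<in> {(d, r). x d r})"
      by (auto simp: matchings_def)
    then show "x \<in> (\<lambda>S d r. (d, r) \<in> S) ` Pow (D \<times> R)" by blast
  qed
  then show ?thesis using assms by (meson finite_SigmaI finite_Pow_iff finite_imageI finite_subset)
qed

lemma finite_ds_feasible: "finite D \<Longrightarrow> finite R \<Longrightarrow> finite {x. ds_feasible D R s x}"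
  by (rule finite_subset[OF _ finite_matchings]) (auto simp: ds_feasible_def)

lemma ds_feasible_empty: "ds_feasible D R s (\<lambda>_ _. False)"
  by (simp add: ds_feasible_def matchings_def msum_def)

lemma ds_feasible_mono:
  assumes "finite D" "finite R" "D' \<subseteq> D" "R' \<subseteq> R" "ds_feasible D' R' s x"
  shows "ds_feasible D R s x"
proof -
  have x: "x \<in> matchings D' R'" using assms(5) by (simp add: ds_feasible_def)
  have fin': "finite D'" "finite R'" using assms(1-4) finite_subset by auto
  have "\<And>d. d \<in> D \<Longrightarrow> {r \<in> R. x d r} = (if d \<in> D' then {r \<in> R'. x d r} else {})"
    "\<And>r. r \<in> R \<Longrightarrow> {d \<in> D. x d r} = (if r \<in> R' then {d \<in> D'. x d r} else {})"
    using x assms(3,4) by (auto simp: matchings_def)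
  moreover have "msum D R s x = msum D' R' s x"
    using assms(1,2) fin'
    by (simp add: msum_eq_sum_matched_pairs matched_pairs_superset[OF x assms(3,4)])
  ultimately show ?thesis
    using assms(3-5) x by (auto simp: ds_feasible_def matchings_def)
qed

lemma ds_optval_mono:
  assumes "finite D" "finite R" "D' \<subseteq> D" "R' \<subseteq> R"
  shows "ds_optval D' R' \<zeta> s \<le> ds_optval D R \<zeta> s"
proof -
  have fin': "finite D'" "finite R'" using assms finite_subset by auto
  have "msum D' R' \<zeta> ` {x. ds_feasible D' R' s x} \<subseteq> msum D R \<zeta> ` {x. ds_feasible D R s x}"
  proof
    fix v assume "v \<in> msum D' R' \<zeta> ` {x. ds_feasible D' R' s x}"
    then obtain x where x: "ds_feasible D' R' s x" "v = msum D' R' \<zeta> x" by auto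
    have "v = msum D R \<zeta> x"
      using x assms fin' matched_pairs_superset[of x D' R' D R]
      by (simp add: msum_eq_sum_matched_pairs ds_feasible_def)
    with ds_feasible_mono[OF assms x(1)] show "v \<in> msum D R \<zeta> ` {x. ds_feasible D R s x}"
      by auto
  qed
  moreover have "msum D' R' \<zeta> ` {x. ds_feasible D' R' s x} \<noteq> {}"
    using ds_feasible_empty by blast
  ultimately show ?thesis
    unfolding ds_optval_def using assms by (intro Max_mono) (auto intro: finite_ds_feasible)
qed

lemma dU_drv_nonneg: "finite D \<Longrightarrow> finite R \<Longrightarrow> 0 \<le> dU_drv D R \<zeta> s d"
  unfolding dU_drv_def using ds_optval_mono[of D R "D - {d}" R \<zeta> s] by auto

lemma dU_rid_nonneg: "finite D \<Longrightarrow> finite R \<Longrightarrow> 0 \<le> dU_rid D R \<zeta> s r"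
  unfolding dU_rid_def using ds_optval_mono[of D R D "R - {r}" \<zeta> s] by auto

lemma bonus_drv_le_msum:
  assumes "finite D" "finite R" "ds_feasible D R s x" "d \<in> D" "r \<in> R" "x d r"
  shows "bonus_drv D R \<zeta> s x d \<le> msum D R s x"
proof -
  have "dU_drv D R \<zeta> s d \<le> (\<Sum>d'\<in>{d' \<in> D. \<exists>r\<in>R. x d' r}. dU_drv D R \<zeta> s d')"
    using assms by (intro member_le_sum) (auto simp: dU_drv_nonneg)
  moreover have "0 \<le> (\<Sum>r'\<in>{r' \<in> R. \<exists>d\<in>D. x d r'}. dU_rid D R \<zeta> s r')"
    using assms(1,2) by (intro sum_nonneg) (simp add: dU_rid_nonneg)
  ultimately have "dU_drv D R \<zeta> s d \<le> dU_total D R \<zeta> s x"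
    unfolding dU_total_def by linarith
  then have "dU_drv D R \<zeta> s d / dU_total D R \<zeta> s x \<le> 1"
    using dU_drv_nonneg[OF assms(1,2), of \<zeta> s d] by (auto simp: divide_le_eq_1)
  moreover have "0 \<le> msum D R s x" using assms(3) by (simp add: ds_feasible_def)
  ultimately show ?thesis unfolding bonus_drv_def by (rule mult_left_le)
qed

lemma bonus_rid_le_msum:
  assumes "finite D" "finite R" "ds_feasible D R s x" "d \<in> D" "r \<in> R" "x d r"
  shows "bonus_rid D R \<zeta> s x r \<le> msum D R s x"
proof -
  have "dU_rid D R \<zeta> s r \<le> (\<Sum>r'\<in>{r' \<in> R. \<exists>d\<in>D. x d r'}. dU_rid D R \<zeta> s r')"
    using assms by (intro member_le_sum) (auto simp: dU_rid_nonneg)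
  moreover have "0 \<le> (\<Sum>d'\<in>{d' \<in> D. \<exists>r\<in>R. x d' r}. dU_drv D R \<zeta> s d')"
    using assms(1,2) by (intro sum_nonneg) (simp add: dU_drv_nonneg)
  ultimately have "dU_rid D R \<zeta> s r \<le> dU_total D R \<zeta> s x"
    unfolding dU_total_def by linarith
  then have "dU_rid D R \<zeta> s r / dU_total D R \<zeta> s x \<le> 1"
    using dU_rid_nonneg[OF assms(1,2), of \<zeta> s r] by (auto simp: divide_le_eq_1)
  moreover have "0 \<le> msum D R s x" using assms(3) by (simp add: ds_feasible_def)
  ultimately show ?thesis unfolding bonus_rid_def by (rule mult_left_le)
qed

lemma ds_outcome_reweighted_infeasible:
  assumes "inj_on rk (matchings D R)"
    and "ds_outcome D R \<zeta> s rk x" "ds_outcome D R \<zeta> s' rk x'" "x \<noteq> x'"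
    and "0 \<le> msum D R s' x"
  shows "msum D R s x' < 0"
proof (rule ccontr)
  assume "\<not> msum D R s x' < 0"
  have opt: "ds_optimal D R \<zeta> s x" "ds_optimal D R \<zeta> s' x'"
    using assms(2,3) by (auto simp: ds_outcome_def)
  then have feas: "ds_feasible D R s' x" "ds_feasible D R s x'"
    using assms(5) \<open>\<not> msum D R s x' < 0\<close> by (auto simp: ds_optimal_def ds_feasible_def)
  with opt have "ds_optimal D R \<zeta> s x'" "ds_optimal D R \<zeta> s' x"
    by (auto simp: ds_optimal_def intro: order_trans)
  with assms(2,3) have "rk x = rk x'"
    by (auto simp: ds_outcome_def intro: antisym)
  moreover have "x \<in> matchings D R" "x' \<in> matchings D R"
    using feas by (auto simp: ds_feasible_def)
  ultimately show False
    using assms(1,4) by (auto dest: inj_onD)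
qed

lemma ds_feasible_drv_partner_unique:
  assumes "finite R" "ds_feasible D R s x" "d \<in> D" "r \<in> R" "x d r" "r' \<in> R" "x d r'"
  shows "r' = r"
proof -
  have "card {r \<in> R. x d r} \<le> Suc 0" using assms(2,3) by (simp add: ds_feasible_def)
  then show ?thesis using assms(1,4-7) by (auto simp: card_le_Suc0_iff_eq)
qed

lemma ds_feasible_rid_partner_unique:
  assumes "finite D" "ds_feasible D R s x" "r \<in> R" "d \<in> D" "x d r" "d' \<in> D" "x d' r"
  shows "d' = d"
proof -
  have "card {d \<in> D. x d r} \<le> Suc 0" using assms(2,3) by (simp add: ds_feasible_def)
  then show ?thesis using assms(1,4-7) by (auto simp: card_le_Suc0_iff_eq)
qed

lemma drv_util_unmatched:
  "\<not> (\<exists>r\<in>R. x d r) \<Longrightarrow> drv_util \<alpha> \<beta> h t f \<tau> D R \<zeta> b \<delta> x d bbar = 0"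
  by (simp add: drv_util_def)

lemma drv_util_misreport_le_unmatched:
  assumes fin: "finite D" "finite R" and rk: "inj_on rk (matchings D R)" and "d \<in> D"
    and x: "ds_outcome D R \<zeta> (sigma \<alpha> \<beta> h t f \<tau> D R b \<delta>) rk x" "\<not> (\<exists>r\<in>R. x d r)"
    and x': "ds_outcome D R \<zeta> (sigma \<alpha> \<beta> h t f \<tau> D R (b(d := b')) \<delta>) rk x'"
  shows "drv_util \<alpha> \<beta> h t f \<tau> D R \<zeta> (b(d := b')) \<delta> x' d (b d)
    \<le> drv_util \<alpha> \<beta> h t f \<tau> D R \<zeta> b \<delta> x d (b d)"
proof -
  define s where "s = sigma \<alpha> \<beta> h t f \<tau> D R b \<delta>"
  define s' where "s' = sigma \<alpha> \<beta> h t f \<tau> D R (b(d := b')) \<delta>"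
  have "drv_util \<alpha> \<beta> h t f \<tau> D R \<zeta> (b(d := b')) \<delta> x' d (b d) < 0" if r0: "r0 \<in> R" "x' d r0" for r0
  proof -
    have feas': "ds_feasible D R s' x'" using x' by (simp add: s'_def ds_outcome_def ds_optimal_def)
    have "msum D R s' x = msum D R s x"
      using fin x(2) by (intro msum_cong) (auto simp: s_def s'_def sigma_def)
    moreover have "0 \<le> msum D R s x"
      using x(1) by (simp add: s_def ds_outcome_def ds_optimal_def ds_feasible_def)
    moreover have "x \<noteq> x'" using x(2) r0 by blast
    ultimately have "msum D R s x' < 0"
      using ds_outcome_reweighted_infeasible[OF rk] x(1) x' by (simp add: s_def s'_def)
    also have "msum D R s x' = msum D R s' x' + (s d r0 - s' d r0)"
      using ds_feasible_drv_partner_unique[OF fin(2) feas' \<open>d \<in> D\<close> r0]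
      by (intro msum_change_single_pair fin \<open>d \<in> D\<close> r0) (auto simp: s_def s'_def sigma_def)
    finally have "s d r0 - s' d r0 + msum D R s' x' < 0" by simp
    moreover have "partner_drv R x' d = r0"
      unfolding partner_drv_def
      using ds_feasible_drv_partner_unique[OF fin(2) feas' \<open>d \<in> D\<close> r0] r0 by blast
    then have "drv_util \<alpha> \<beta> h t f \<tau> D R \<zeta> (b(d := b')) \<delta> x' d (b d)
        = s d r0 - s' d r0 + bonus_drv D R \<zeta> s' x' d"
      using r0 by (auto simp: drv_util_def s_def s'_def sigma_def)
    moreover have "bonus_drv D R \<zeta> s' x' d \<le> msum D R s' x'"
      using bonus_drv_le_msum[OF fin feas' \<open>d \<in> D\<close> r0] .
    ultimately show ?thesis by linarith
  qed
  then show ?thesis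
    using x(2) by (cases "\<exists>r\<in>R. x' d r") (auto simp: drv_util_unmatched intro: less_imp_le)
qed

lemma rid_util_unmatched:
  "\<not> (\<exists>d\<in>D. x d r) \<Longrightarrow> rid_util \<alpha> \<beta> h t f \<tau> D R \<zeta> b \<delta> x r dbar = 0"
  by (simp add: rid_util_def)

lemma rid_util_misreport_le_unmatched:
  assumes fin: "finite D" "finite R" and rk: "inj_on rk (matchings D R)" and "r \<in> R"
    and x: "ds_outcome D R \<zeta> (sigma \<alpha> \<beta> h t f \<tau> D R b \<delta>) rk x" "\<not> (\<exists>d\<in>D. x d r)"
    and x': "ds_outcome D R \<zeta> (sigma \<alpha> \<beta> h t f \<tau> D R b (\<delta>(r := d'))) rk x'"
  shows "rid_util \<alpha> \<beta> h t f \<tau> D R \<zeta> b (\<delta>(r := d')) x' r (\<delta> r)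
    \<le> rid_util \<alpha> \<beta> h t f \<tau> D R \<zeta> b \<delta> x r (\<delta> r)"
proof -
  define s where "s = sigma \<alpha> \<beta> h t f \<tau> D R b \<delta>"
  define s' where "s' = sigma \<alpha> \<beta> h t f \<tau> D R b (\<delta>(r := d'))"
  have "rid_util \<alpha> \<beta> h t f \<tau> D R \<zeta> b (\<delta>(r := d')) x' r (\<delta> r) < 0" if d0: "d0 \<in> D" "x' d0 r" for d0
  proof -
    have feas': "ds_feasible D R s' x'" using x' by (simp add: s'_def ds_outcome_def ds_optimal_def)
    have "msum D R s' x = msum D R s x"
      using fin x(2) by (intro msum_cong) (auto simp: s_def s'_def sigma_def)
    moreover have "0 \<le> msum D R s x"
      using x(1) by (simp add: s_def ds_outcome_def ds_optimal_def ds_feasible_def)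
    moreover have "x \<noteq> x'" using x(2) d0 by blast
    ultimately have "msum D R s x' < 0"
      using ds_outcome_reweighted_infeasible[OF rk] x(1) x' by (simp add: s_def s'_def)
    also have "msum D R s x' = msum D R s' x' + (s d0 r - s' d0 r)"
      using ds_feasible_rid_partner_unique[OF fin(1) feas' \<open>r \<in> R\<close> d0]
      by (intro msum_change_single_pair fin \<open>r \<in> R\<close> d0) (auto simp: s_def s'_def sigma_def)
    finally have "s d0 r - s' d0 r + msum D R s' x' < 0" by simp
    moreover have "partner_rid D x' r = d0"
      unfolding partner_rid_def
      using ds_feasible_rid_partner_unique[OF fin(1) feas' \<open>r \<in> R\<close> d0] d0 by blast
    then have "rid_util \<alpha> \<beta> h t f \<tau> D R \<zeta> b (\<delta>(r := d')) x' r (\<delta> r)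
        = s d0 r - s' d0 r + bonus_rid D R \<zeta> s' x' r"
      using d0 by (auto simp: rid_util_def s_def s'_def sigma_def)
    moreover have "bonus_rid D R \<zeta> s' x' r \<le> msum D R s' x'"
      using bonus_rid_le_msum[OF fin feas' d0(1) \<open>r \<in> R\<close> d0(2)] .
    ultimately show ?thesis by linarith
  qed
  then show ?thesis
    using x(2) by (cases "\<exists>d\<in>D. x' d r") (auto simp: rid_util_unmatched intro: less_imp_le)
qed

theorem lemma1:
  fixes D :: "'d set" and R :: "'r set" and \<alpha> \<beta> :: real
    and h :: "'r \<Rightarrow> real" and t :: "'r \<Rightarrow> 'l" and f :: "'l \<Rightarrow> real"
    and \<tau> \<zeta> :: "'d \<Rightarrow> 'r \<Rightarrow> real" and rk :: "('d \<Rightarrow> 'r \<Rightarrow> bool) \<Rightarrow> nat"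
    and b :: "'d \<Rightarrow> real" and \<delta> :: "'r \<Rightarrow> real"
  assumes "finite D" and "finite R" and "\<alpha> > 0" and "\<beta> > 0"
    and "\<forall>d r. \<tau> d r \<ge> 0" and "\<forall>d r. \<zeta> d r \<ge> 0"
    and "inj_on rk (matchings D R)"
  shows
    "(\<forall>d bbar b' x x'. d \<in> D \<longrightarrow> b d = bbar
        \<longrightarrow> ds_outcome D R \<zeta> (sigma \<alpha> \<beta> h t f \<tau> D R b \<delta>) rk x
        \<longrightarrow> \<not> (\<exists>r\<in>R. x d r)
        \<longrightarrow> ds_outcome D R \<zeta> (sigma \<alpha> \<beta> h t f \<tau> D R (b(d := b')) \<delta>) rk x'
        \<longrightarrow> drv_util \<alpha> \<beta> h t f \<tau> D R \<zeta> (b(d := b')) \<delta> x' d bbar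
            \<le> drv_util \<alpha> \<beta> h t f \<tau> D R \<zeta> b \<delta> x d bbar)
   \<and> (\<forall>r dbar d' x x'. r \<in> R \<longrightarrow> \<delta> r = dbar
        \<longrightarrow> ds_outcome D R \<zeta> (sigma \<alpha> \<beta> h t f \<tau> D R b \<delta>) rk x
        \<longrightarrow> \<not> (\<exists>d\<in>D. x d r)
        \<longrightarrow> ds_outcome D R \<zeta> (sigma \<alpha> \<beta> h t f \<tau> D R b (\<delta>(r := d'))) rk x'
        \<longrightarrow> rid_util \<alpha> \<beta> h t f \<tau> D R \<zeta> b (\<delta>(r := d')) x' r dbar
            \<le> rid_util \<alpha> \<beta> h t f \<tau> D R \<zeta> b \<delta> x r dbar)"
proof (intro conjI allI impI)
  fix d bbar b' x x'
  assume "d \<in> D" "b d = bbar" "ds_outcome D R \<zeta> (sigma \<alpha> \<beta> h t f \<tau> D R b \<delta>) rk x"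
    "\<not> (\<exists>r\<in>R. x d r)" "ds_outcome D R \<zeta> (sigma \<alpha> \<beta> h t f \<tau> D R (b(d := b')) \<delta>) rk x'"
  then show "drv_util \<alpha> \<beta> h t f \<tau> D R \<zeta> (b(d := b')) \<delta> x' d bbar
      \<le> drv_util \<alpha> \<beta> h t f \<tau> D R \<zeta> b \<delta> x d bbar"
    using drv_util_misreport_le_unmatched[OF assms(1,2,7)] by blast
next
  fix r dbar d' x x'
  assume "r \<in> R" "\<delta> r = dbar" "ds_outcome D R \<zeta> (sigma \<alpha> \<beta> h t f \<tau> D R b \<delta>) rk x"
    "\<not> (\<exists>d\<in>D. x d r)" "ds_outcome D R \<zeta> (sigma \<alpha> \<beta> h t f \<tau> D R b (\<delta>(r := d'))) rk x'"
  then show "rid_util \<alpha> \<beta> h t f \<tau> D R \<zeta> b (\<delta>(r := d')) x' r dbar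
      \<le> rid_util \<alpha> \<beta> h t f \<tau> D R \<zeta> b \<delta> x r dbar"
    using rid_util_misreport_le_unmatched[OF assms(1,2,7)] by blast
qed

end
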